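(* Let $\psi\in C^\infty(P)$ be strongly convex and, for $s\in\mathbb R$, let $g_s=g_P+s\psi$ with Hessian $H_s$ on $\check P$. Let $K$ be a compact subset of $\check P$. Then there exist $s_K\ge0$ and, for every $t<-s_K$, a negative-definite island $U^K_t$ of $g_t$ with $K\subset U^K_t$, such that $U^K_t\subseteq U^K_{t'}$ whenever $t'<t<-s_K$. Moreover $\bigcup_{t<-s_K}U^K_t=\check P$.
   Context: Let $P=\{x\in\mathbb R^n:\ell_j(x)=\langle\nu_j,x\rangle+\lambda_j\ge0,\ j=1,\dots,r\}$ be a Delzant polytope with interior $\check P$, and $g_P=\frac12\sum_{j=1}^r\ell_j\log\ell_j$ on $\check P$. Strongly convex means the Hessian of $\psi$ is positive definite on $P$. For $s\in\mathbb R$, a negative-definite island of $g_s$ is a connected component of the open set $\{x\in\check P: H_s(x)\text{ is negative definite}\}$. *)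

theory Defs
  imports "HOL-Analysis.Analysis"
begin

definition aff_fun :: "(nat \<Rightarrow> real^'n) \<Rightarrow> (nat \<Rightarrow> real) \<Rightarrow> nat \<Rightarrow> real^'n \<Rightarrow> real" where
  "aff_fun \<nu> lam j x = \<nu> j \<bullet> x + lam j"

definition polytope_of :: "(nat \<Rightarrow> real^'n) \<Rightarrow> (nat \<Rightarrow> real) \<Rightarrow> nat \<Rightarrow> (real^'n) set" where
  "polytope_of \<nu> lam r = {x. \<forall>j<r. aff_fun \<nu> lam j x \<ge> 0}"

definition int_vec :: "real^'n \<Rightarrow> bool" where
  "int_vec v \<longleftrightarrow> (\<forall>i. v $ i \<in> \<int>)"

definition primitive_vec :: "real^'n \<Rightarrow> bool" where
  "primitive_vec v \<longleftrightarrow> int_vec v \<and> v \<noteq> 0 \<and>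
     (\<forall>m::nat. m > 1 \<longrightarrow> \<not> int_vec (inverse (real m) *\<^sub>R v))"

definition delzant :: "(nat \<Rightarrow> real^'n) \<Rightarrow> (nat \<Rightarrow> real) \<Rightarrow> nat \<Rightarrow> bool" where
  "delzant \<nu> lam r \<longleftrightarrow>
     (let P = polytope_of \<nu> lam r;
          F = (\<lambda>j. {x \<in> P. aff_fun \<nu> lam j x = 0}) in
     bounded P \<and> interior P \<noteq> {} \<and>
     (\<forall>j<r. primitive_vec (\<nu> j)) \<and>
     (\<forall>j<r. F j face_of P \<and> aff_dim (F j) = int CARD('n) - 1) \<and>
     (\<forall>j<r. \<forall>k<r. j \<noteq> k \<longrightarrow> F j \<noteq> F k) \<and>
     (\<forall>v. v extreme_point_of P \<longrightarrow>
        (let J = {j. j < r \<and> aff_fun \<nu> lam j v = 0} in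
          card J = CARD('n) \<and>
          (\<forall>z::real^'n. int_vec z \<longrightarrow>
             (\<exists>c. (\<forall>j\<in>J. c j \<in> \<int>) \<and> z = (\<Sum>j\<in>J. c j *\<^sub>R \<nu> j))))))"

text \<open>g_P = 1/2 sum_j l_j log l_j (relevant on the interior of P).\<close>

definition g_P :: "(nat \<Rightarrow> real^'n) \<Rightarrow> (nat \<Rightarrow> real) \<Rightarrow> nat \<Rightarrow> real^'n \<Rightarrow> real" where
  "g_P \<nu> lam r x = (1/2) * (\<Sum>j<r. aff_fun \<nu> lam j x * ln (aff_fun \<nu> lam j x))"

text \<open>C^infinity on an open set U: there is a family F of functions indexed by
  multi-indices (lists of coordinate directions) with F [] = f, such that every F alpha
  is (Frechet) differentiable on U with partial derivative in direction i given by
  F (i # alpha). This says all partial derivatives of all orders exist and are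
  differentiable, i.e. f is smooth.\<close>

definition smooth_on :: "(real^'n) set \<Rightarrow> (real^'n \<Rightarrow> real) \<Rightarrow> bool" where
  "smooth_on U f \<longleftrightarrow> (\<exists>F :: 'n list \<Rightarrow> real^'n \<Rightarrow> real. F [] = f \<and>
     (\<forall>\<alpha>. \<forall>x\<in>U. (F \<alpha> has_derivative (\<lambda>h. \<Sum>i\<in>UNIV. h $ i * F (i # \<alpha>) x)) (at x)))"

definition partial :: "'n \<Rightarrow> (real^'n \<Rightarrow> real) \<Rightarrow> real^'n \<Rightarrow> real" where
  "partial i f x = deriv (\<lambda>t. f (x + t *\<^sub>R axis i 1)) 0"

definition hessian :: "(real^'n \<Rightarrow> real) \<Rightarrow> real^'n \<Rightarrow> real^'n^'n" where
  "hessian f x = (\<chi> i j. partial i (partial j f) x)"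

definition pos_def :: "real^'n^'n \<Rightarrow> bool" where
  "pos_def A \<longleftrightarrow> (\<forall>v. v \<noteq> 0 \<longrightarrow> v \<bullet> (A *v v) > 0)"

definition neg_def :: "real^'n^'n \<Rightarrow> bool" where
  "neg_def A \<longleftrightarrow> (\<forall>v. v \<noteq> 0 \<longrightarrow> v \<bullet> (A *v v) < 0)"

definition neg_islands :: "(real^'n) set \<Rightarrow> (real^'n \<Rightarrow> real) \<Rightarrow> (real^'n) set set" where
  "neg_islands P g = components {x \<in> interior P. neg_def (hessian g x)}"

end

theory Submission
  imports Defs
begin

text \<open>On the interior of \<open>P\<close> the Hessian of \<open>g\<^sub>t = g\<^sub>P + t \<psi>\<close> is \<open>H\<^sub>P + t Hess \<psi>\<close> with \<open>H\<^sub>P\<close>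
  continuous and \<open>Hess \<psi>\<close> positive definite, so on every compact subset of the interior
  \<open>H\<^sub>t\<close> is negative definite once \<open>t\<close> is negative enough, and the negative-definite set only
  grows as \<open>t\<close> decreases. Fix a point \<open>x\<^sub>0\<close> and take \<open>U\<^sub>t\<close> to be the component through
  \<open>x\<^sub>0\<close>: it eventually contains the convex hull of \<open>K \<union> {x\<^sub>0}\<close>, and every interior point \<open>y\<close>
  lies in some \<open>U\<^sub>t\<close> because the segment from \<open>x\<^sub>0\<close> to \<open>y\<close> is a compact connected set.\<close>

lemma partial_eqI:
  "((\<lambda>s. f (x + s *\<^sub>R axis i 1)) has_real_derivative D) (at 0) \<Longrightarrow> partial i f x = D"
  unfolding partial_def by (rule DERIV_imp_deriv)

lemma partial_cong:
  assumes "open S" "x \<in> S" "\<And>y. y \<in> S \<Longrightarrow> f y = g y"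
  shows "partial i f x = partial i g x"
proof -
  have "open ((\<lambda>s::real. x + s *\<^sub>R axis i 1) -` S)"
    by (rule continuous_open_vimage[OF assms(1)]) (intro allI continuous_intros)
  then have "eventually (\<lambda>s. x + s *\<^sub>R axis i 1 \<in> S) (nhds 0)"
    using eventually_nhds_in_open[of _ 0] assms(2) by fastforce
  then have "eventually (\<lambda>s. f (x + s *\<^sub>R axis i 1) = g (x + s *\<^sub>R axis i 1)) (nhds 0)"
    by (rule eventually_mono) (use assms(3) in blast)
  then have "((\<lambda>s. f (x + s *\<^sub>R axis i 1)) has_real_derivative D) (at 0) \<longleftrightarrow>
             ((\<lambda>s. g (x + s *\<^sub>R axis i 1)) has_real_derivative D) (at 0)" for D
    by (rule DERIV_cong_ev[OF refl _ refl])
  then show ?thesis unfolding partial_def deriv_def by simp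
qed

lemma has_derivative_imp_axis_derivative:
  fixes f :: "real^'n \<Rightarrow> real"
  assumes "(f has_derivative (\<lambda>h. \<Sum>i\<in>UNIV. h $ i * D i)) (at x)"
  shows "((\<lambda>s. f (x + s *\<^sub>R axis k 1)) has_real_derivative D k) (at 0)"
proof -
  have line: "((\<lambda>s::real. x + s *\<^sub>R axis k 1) has_derivative (\<lambda>s. s *\<^sub>R axis k 1)) (at 0)"
    by (auto intro!: derivative_eq_intros)
  have "((f \<circ> (\<lambda>s::real. x + s *\<^sub>R axis k 1)) has_derivative
        ((\<lambda>h. \<Sum>i\<in>UNIV. h $ i * D i) \<circ> (\<lambda>s. s *\<^sub>R axis k 1))) (at 0)"
    by (rule diff_chain_at[OF line]) (simp add: assms)
  moreover have "((\<lambda>h. \<Sum>i\<in>UNIV. h $ i * D i) \<circ> (\<lambda>s. s *\<^sub>R axis k 1)) = (*) (D k)"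
  proof
    fix s :: real
    have "(\<Sum>i\<in>UNIV. (s *\<^sub>R axis k 1) $ i * D i) = (\<Sum>i\<in>UNIV. if i = k then s * D i else 0)"
      by (intro sum.cong) (auto simp: axis_def)
    then show "((\<lambda>h. \<Sum>i\<in>UNIV. h $ i * D i) \<circ> (\<lambda>s. s *\<^sub>R axis k 1)) s = D k * s"
      by simp
  qed
  ultimately show ?thesis
    by (simp add: has_field_derivative_def o_def)
qed

lemma hessian_eqI:
  assumes "open S" "y \<in> S"
    and "\<And>z j. z \<in> S \<Longrightarrow> ((\<lambda>s. f (z + s *\<^sub>R axis j 1)) has_real_derivative Df j z) (at 0)"
    and "\<And>i j. ((\<lambda>s. Df j (y + s *\<^sub>R axis i 1)) has_real_derivative Ddf i j) (at 0)"
  shows "hessian f y = (\<chi> i j. Ddf i j)"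
proof -
  have "partial i (partial j f) y = Ddf i j" for i j
  proof -
    have "partial i (partial j f) y = partial i (Df j) y"
      using assms(3) by (intro partial_cong[OF assms(1,2)] partial_eqI)
    also have "\<dots> = Ddf i j"
      by (rule partial_eqI[OF assms(4)])
    finally show ?thesis .
  qed
  then show ?thesis by (simp add: hessian_def)
qed

lemma smooth_on_axis_derivatives:
  assumes "smooth_on U f"
  obtains F :: "'n list \<Rightarrow> real^'n \<Rightarrow> real" where "F [] = f"
    and "\<And>\<alpha> x i. x \<in> U \<Longrightarrow>
           ((\<lambda>s. F \<alpha> (x + s *\<^sub>R axis i 1)) has_real_derivative F (i # \<alpha>) x) (at 0)"
    and "\<And>\<alpha>. continuous_on U (F \<alpha>)"
proof -
  obtain F :: "'n list \<Rightarrow> real^'n \<Rightarrow> real" where F0: "F [] = f"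
    and FD: "\<And>\<alpha> x. x \<in> U \<Longrightarrow> (F \<alpha> has_derivative (\<lambda>h. \<Sum>i\<in>UNIV. h $ i * F (i # \<alpha>) x)) (at x)"
    using assms unfolding smooth_on_def by blast
  show ?thesis
  proof (rule that)
    show "F [] = f" by (fact F0)
    show "((\<lambda>s. F \<alpha> (x + s *\<^sub>R axis i 1)) has_real_derivative F (i # \<alpha>) x) (at 0)"
      if "x \<in> U" for \<alpha> x i
      using FD[OF that] by (rule has_derivative_imp_axis_derivative)
    show "continuous_on U (F \<alpha>)" for \<alpha>
      using FD by (intro continuous_at_imp_continuous_on) (blast dest: has_derivative_continuous)
  qed
qed

lemma smooth_on_hessian:
  assumes "open U" "y \<in> U" "F [] = f"
    and "\<And>\<alpha> x i. x \<in> U \<Longrightarrow>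
           ((\<lambda>s. F \<alpha> (x + s *\<^sub>R axis i 1)) has_real_derivative F (i # \<alpha>) x) (at 0)"
  shows "hessian f y = (\<chi> i j. F [i, j] y)"
  using assms by (intro hessian_eqI[where Df = "\<lambda>j. F [j]"]) auto

lemma aff_fun_axis_shift:
  "aff_fun \<nu> lam k (y + s *\<^sub>R axis i 1) = aff_fun \<nu> lam k y + s * \<nu> k $ i"
  by (simp add: aff_fun_def inner_add_right inner_axis)

lemma convex_polytope_of: "convex (polytope_of \<nu> lam r)"
proof (rule convexI)
  fix x y and u v :: real assume xy: "x \<in> polytope_of \<nu> lam r" "y \<in> polytope_of \<nu> lam r"
    and uv: "0 \<le> u" "0 \<le> v" "u + v = 1"
  have "aff_fun \<nu> lam j (u *\<^sub>R x + v *\<^sub>R y) = u * aff_fun \<nu> lam j x + v * aff_fun \<nu> lam j y" for j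
  proof -
    have "lam j = u * lam j + v * lam j" using uv(3) by (metis distrib_right mult_1)
    then show ?thesis by (simp add: aff_fun_def inner_add_right algebra_simps)
  qed
  then show "u *\<^sub>R x + v *\<^sub>R y \<in> polytope_of \<nu> lam r"
    using xy uv by (simp add: polytope_of_def)
qed

lemma aff_fun_pos_interior:
  assumes "y \<in> interior (polytope_of \<nu> lam r)" "k < r" "\<nu> k \<noteq> 0"
  shows "aff_fun \<nu> lam k y > 0"
proof -
  obtain e where e: "e > 0" "ball y e \<subseteq> polytope_of \<nu> lam r"
    using assms(1) by (meson mem_interior)
  define z where "z = y - (e / 2 / norm (\<nu> k)) *\<^sub>R \<nu> k"
  have nz: "norm (\<nu> k) > 0" using assms(3) by simp
  have "dist y z = e / 2" using nz e by (simp add: z_def dist_norm)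
  then have "z \<in> polytope_of \<nu> lam r" using e by auto
  then have "aff_fun \<nu> lam k z \<ge> 0" using assms(2) by (simp add: polytope_of_def)
  moreover have "aff_fun \<nu> lam k z = aff_fun \<nu> lam k y - (e/2/norm (\<nu> k)) * (\<nu> k \<bullet> \<nu> k)"
    by (simp add: z_def aff_fun_def inner_diff_right)
  moreover have "(e/2/norm (\<nu> k)) * (\<nu> k \<bullet> \<nu> k) > 0" using nz e by simp
  ultimately show ?thesis by linarith
qed

definition grad_g_P :: "(nat \<Rightarrow> real^'n) \<Rightarrow> (nat \<Rightarrow> real) \<Rightarrow> nat \<Rightarrow> 'n \<Rightarrow> real^'n \<Rightarrow> real" where
  "grad_g_P \<nu> lam r j y = (1/2) * (\<Sum>k<r. \<nu> k $ j * (ln (aff_fun \<nu> lam k y) + 1))"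

definition hess_g_P :: "(nat \<Rightarrow> real^'n) \<Rightarrow> (nat \<Rightarrow> real) \<Rightarrow> nat \<Rightarrow> real^'n \<Rightarrow> real^'n^'n" where
  "hess_g_P \<nu> lam r y = (\<chi> i j. (1/2) * (\<Sum>k<r. \<nu> k $ j * \<nu> k $ i / aff_fun \<nu> lam k y))"

lemma g_P_axis_derivative:
  assumes "\<forall>k<r. aff_fun \<nu> lam k y > 0"
  shows "((\<lambda>s. g_P \<nu> lam r (y + s *\<^sub>R axis i 1)) has_real_derivative grad_g_P \<nu> lam r i y) (at 0)"
proof -
  have "((\<lambda>s. (aff_fun \<nu> lam k y + s * \<nu> k $ i) * ln (aff_fun \<nu> lam k y + s * \<nu> k $ i))
      has_real_derivative \<nu> k $ i * (ln (aff_fun \<nu> lam k y) + 1)) (at 0)" if "k \<in> {..<r}" for k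
    using assms that by (auto intro!: derivative_eq_intros simp: field_simps)
  then have "((\<lambda>s. (1/2) * (\<Sum>k<r. (aff_fun \<nu> lam k y + s * \<nu> k $ i) * ln (aff_fun \<nu> lam k y + s * \<nu> k $ i)))
      has_real_derivative (1/2) * (\<Sum>k<r. \<nu> k $ i * (ln (aff_fun \<nu> lam k y) + 1))) (at 0)"
    by (intro DERIV_cmult DERIV_sum)
  then show ?thesis by (simp add: g_P_def aff_fun_axis_shift grad_g_P_def)
qed

lemma grad_g_P_axis_derivative:
  assumes "\<forall>k<r. aff_fun \<nu> lam k y > 0"
  shows "((\<lambda>s. grad_g_P \<nu> lam r j (y + s *\<^sub>R axis i 1)) has_real_derivative hess_g_P \<nu> lam r y $ i $ j) (at 0)"
proof -
  have "((\<lambda>s. \<nu> k $ j * (ln (aff_fun \<nu> lam k y + s * \<nu> k $ i) + 1))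
      has_real_derivative \<nu> k $ j * \<nu> k $ i / aff_fun \<nu> lam k y) (at 0)" if "k \<in> {..<r}" for k
    using assms that by (auto intro!: derivative_eq_intros simp: field_simps)
  then have "((\<lambda>s. (1/2) * (\<Sum>k<r. \<nu> k $ j * (ln (aff_fun \<nu> lam k y + s * \<nu> k $ i) + 1)))
      has_real_derivative (1/2) * (\<Sum>k<r. \<nu> k $ j * \<nu> k $ i / aff_fun \<nu> lam k y)) (at 0)"
    by (intro DERIV_cmult DERIV_sum)
  then show ?thesis by (simp add: grad_g_P_def aff_fun_axis_shift hess_g_P_def)
qed

lemma continuous_on_hess_g_P:
  assumes "\<forall>y\<in>S. \<forall>k<r. aff_fun \<nu> lam k y > 0"
  shows "continuous_on S (hess_g_P \<nu> lam r)"
  unfolding hess_g_P_def using assms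
  by (auto simp: aff_fun_def intro!: continuous_intros dest: less_imp_neq[THEN not_sym])

lemma hessian_g_P_plus_smooth:
  assumes "open S" "S \<subseteq> U" "y \<in> S" "\<forall>z\<in>S. \<forall>k<r. aff_fun \<nu> lam k z > 0" "F [] = \<psi>"
    and F: "\<And>\<alpha> x i. x \<in> U \<Longrightarrow>
           ((\<lambda>s. F \<alpha> (x + s *\<^sub>R axis i 1)) has_real_derivative F (i # \<alpha>) x) (at 0)"
  shows "hessian (\<lambda>x. g_P \<nu> lam r x + t * \<psi> x) y = hess_g_P \<nu> lam r y + t *\<^sub>R (\<chi> i j. F [i, j] y)"
proof -
  have "hessian (\<lambda>x. g_P \<nu> lam r x + t * \<psi> x) y
      = (\<chi> i j. hess_g_P \<nu> lam r y $ i $ j + t * F [i, j] y)"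
  proof (rule hessian_eqI[OF assms(1,3), where Df = "\<lambda>j z. grad_g_P \<nu> lam r j z + t * F [j] z"])
    show "((\<lambda>s. g_P \<nu> lam r (z + s *\<^sub>R axis j 1) + t * \<psi> (z + s *\<^sub>R axis j 1))
        has_real_derivative grad_g_P \<nu> lam r j z + t * F [j] z) (at 0)" if "z \<in> S" for z j
      using g_P_axis_derivative[of r \<nu> lam z j] F[where \<alpha>="[]" and x=z and i=j] assms(2,4,5) that
      by (auto intro!: DERIV_add DERIV_cmult)
    show "((\<lambda>s. grad_g_P \<nu> lam r j (y + s *\<^sub>R axis i 1) + t * F [j] (y + s *\<^sub>R axis i 1))
        has_real_derivative hess_g_P \<nu> lam r y $ i $ j + t * F [i, j] y) (at 0)" for i j
      using grad_g_P_axis_derivative[of r \<nu> lam y j i] F[where \<alpha>="[j]" and x=y and i=i] assms(2,3,4)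
      by (auto intro!: DERIV_add DERIV_cmult)
  qed
  then show ?thesis by (simp add: vec_eq_iff)
qed

lemma hessian_g_P_plus_smooth_pencil:
  assumes "\<forall>j<r. \<nu> j \<noteq> 0" "open U0" "polytope_of \<nu> lam r \<subseteq> U0" "smooth_on U0 \<psi>"
    and "\<forall>x\<in>polytope_of \<nu> lam r. pos_def (hessian \<psi> x)"
  obtains H where "continuous_on (interior (polytope_of \<nu> lam r)) H"
    and "\<forall>x\<in>interior (polytope_of \<nu> lam r). pos_def (H x)"
    and "\<And>x t. x \<in> interior (polytope_of \<nu> lam r) \<Longrightarrow>
           hessian (\<lambda>x. g_P \<nu> lam r x + t * \<psi> x) x = hess_g_P \<nu> lam r x + t *\<^sub>R H x"
proof -
  define S where "S = interior (polytope_of \<nu> lam r)"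
  have aff_pos: "\<forall>y\<in>S. \<forall>k<r. aff_fun \<nu> lam k y > 0"
    unfolding S_def using assms(1) aff_fun_pos_interior by blast
  have SU0: "S \<subseteq> U0" using assms(3) interior_subset unfolding S_def by blast
  obtain F where F0: "F [] = \<psi>"
    and F: "\<And>\<alpha> x i. x \<in> U0 \<Longrightarrow>
           ((\<lambda>s. F \<alpha> (x + s *\<^sub>R axis i 1)) has_real_derivative F (i # \<alpha>) x) (at 0)"
    and cF: "\<And>\<alpha>. continuous_on U0 (F \<alpha>)"
    using smooth_on_axis_derivatives[OF assms(4)] by blast
  define H where "H x = (\<chi> i j. F [i, j] x)" for x
  show ?thesis
  proof (rule that[of H, folded S_def])
    show "continuous_on S H"
      unfolding H_def by (intro continuous_on_vec_lambda continuous_on_subset[OF cF SU0])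
    show "\<forall>x\<in>S. pos_def (H x)"
    proof
      fix x assume "x \<in> S"
      then have "x \<in> polytope_of \<nu> lam r" "x \<in> U0"
        using SU0 interior_subset unfolding S_def by auto
      then show "pos_def (H x)"
        using assms(5) smooth_on_hessian[OF assms(2) _ F0 F] unfolding H_def by auto
    qed
    show "hessian (\<lambda>x. g_P \<nu> lam r x + t * \<psi> x) x = hess_g_P \<nu> lam r x + t *\<^sub>R H x"
      if "x \<in> S" for x t
      unfolding H_def by (rule hessian_g_P_plus_smooth[OF _ SU0 that aff_pos F0 F]) (simp add: S_def)
  qed
qed

lemma quadratic_form_scaleR:
  "(c *\<^sub>R (u::real^'n)) \<bullet> (M *v (c *\<^sub>R u)) = c\<^sup>2 * (u \<bullet> (M *v u))"
  by (simp add: matrix_vector_mult_scaleR power2_eq_square)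

lemma quadratic_form_add_scaleR:
  "(u::real^'n) \<bullet> ((A + t *\<^sub>R B) *v u) = u \<bullet> (A *v u) + t * (u \<bullet> (B *v u))"
  by (simp add: matrix_vector_mult_add_rdistrib scaleR_matrix_vector_assoc[symmetric] inner_add_right)

lemma neg_def_iff_unit: "neg_def (A :: real^'n^'n) \<longleftrightarrow> (\<forall>u. norm u = 1 \<longrightarrow> u \<bullet> (A *v u) < 0)"
proof
  assume unit: "\<forall>u. norm u = 1 \<longrightarrow> u \<bullet> (A *v u) < 0"
  have "v \<bullet> (A *v v) < 0" if "v \<noteq> 0" for v :: "real^'n"
  proof -
    define u where "u = (1 / norm v) *\<^sub>R v"
    have "v = norm v *\<^sub>R u" "norm u = 1" using that by (simp_all add: u_def)
    then have "v \<bullet> (A *v v) = (norm v)\<^sup>2 * (u \<bullet> (A *v u))"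
      by (metis quadratic_form_scaleR)
    then show ?thesis using unit \<open>norm u = 1\<close> that by (simp add: mult_pos_neg)
  qed
  then show "neg_def A" by (simp add: neg_def_def)
qed (metis neg_def_def norm_zero zero_neq_one)

lemma continuous_on_quadratic_form:
  fixes A :: "'a::topological_space \<Rightarrow> real^'n^'n"
  assumes "continuous_on C A"
  shows "continuous_on (C \<times> UNIV) (\<lambda>p. snd p \<bullet> (A (fst p) *v snd p))"
proof -
  have cA: "continuous_on (C \<times> UNIV) (\<lambda>p. A (fst p))"
    by (rule continuous_on_compose2[OF assms continuous_on_fst]) auto
  show ?thesis
    by (simp add: inner_vec_def matrix_vector_mult_def) (intro continuous_intros cA)
qed

lemma compact_quadratic_form_image:
  fixes A :: "'a::topological_space \<Rightarrow> real^'n^'n"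
  assumes "compact C" "continuous_on C A"
  shows "compact ((\<lambda>p. snd p \<bullet> (A (fst p) *v snd p)) ` (C \<times> sphere 0 1))"
proof (rule compact_continuous_image)
  show "continuous_on (C \<times> sphere 0 1) (\<lambda>p. snd p \<bullet> (A (fst p) *v snd p))"
    by (rule continuous_on_subset[OF continuous_on_quadratic_form[OF assms(2)]]) auto
  show "compact (C \<times> sphere (0::real^'n) 1)"
    by (simp add: assms(1) compact_Times)
qed

lemma compact_quadratic_form_bounded:
  fixes A :: "'a::topological_space \<Rightarrow> real^'n^'n"
  assumes "compact C" "continuous_on C A"
  obtains M where "\<And>x u. x \<in> C \<Longrightarrow> norm u = 1 \<Longrightarrow> u \<bullet> (A x *v u) \<le> M"
proof -
  obtain M where "\<forall>q\<in>(\<lambda>p. snd p \<bullet> (A (fst p) *v snd p)) ` (C \<times> sphere 0 1). \<bar>q\<bar> \<le> M"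
    using compact_imp_bounded[OF compact_quadratic_form_image[OF assms]] by (auto simp: bounded_iff)
  then show ?thesis by (intro that[of M]) force
qed

lemma compact_pos_def_uniform:
  fixes B :: "'a::topological_space \<Rightarrow> real^'n^'n"
  assumes "compact C" "continuous_on C B" "\<forall>x\<in>C. pos_def (B x)"
  obtains m where "m > 0" "\<And>x u. x \<in> C \<Longrightarrow> norm u = 1 \<Longrightarrow> m \<le> u \<bullet> (B x *v u)"
proof (cases "C = {}")
  case False
  define Q where "Q = (\<lambda>p. snd p \<bullet> (B (fst p) *v snd p)) ` (C \<times> sphere (0::real^'n) 1)"
  obtain u1 :: "real^'n" where "norm u1 = 1" using vector_choose_size[of 1] by auto
  then have "Q \<noteq> {}" using False by (auto simp: Q_def)
  then obtain m where m: "m \<in> Q" "\<And>q. q \<in> Q \<Longrightarrow> m \<le> q"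
    using compact_attains_inf[OF compact_quadratic_form_image[OF assms(1,2)]] Q_def by metis
  show ?thesis
  proof (rule that)
    from m(1) obtain x u where "x \<in> C" "norm u = 1" "m = u \<bullet> (B x *v u)"
      by (auto simp: Q_def)
    moreover have "u \<noteq> 0" using \<open>norm u = 1\<close> by auto
    ultimately show "m > 0"
      using assms(3) by (simp add: pos_def_def)
    show "m \<le> u \<bullet> (B x *v u)" if "x \<in> C" "norm u = 1" for x u
    proof (rule m(2))
      have "(x, u) \<in> C \<times> sphere 0 1" using that by simp
      then show "u \<bullet> (B x *v u) \<in> Q" unfolding Q_def by (rule rev_image_eqI) simp
    qed
  qed
qed (use that[of 1] in auto)

lemma eventually_neg_def_add_scaleR:
  fixes A B :: "'a::topological_space \<Rightarrow> real^'n^'n"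
  assumes "compact C" "continuous_on C A" "continuous_on C B" "\<forall>x\<in>C. pos_def (B x)"
  shows "\<forall>\<^sub>F t in at_bot. \<forall>x\<in>C. neg_def (A x + t *\<^sub>R B x)"
proof -
  obtain M where M: "\<And>x u. x \<in> C \<Longrightarrow> norm u = 1 \<Longrightarrow> u \<bullet> (A x *v u) \<le> M"
    using compact_quadratic_form_bounded[OF assms(1,2)] by blast
  obtain m where m: "m > 0" "\<And>x u. x \<in> C \<Longrightarrow> norm u = 1 \<Longrightarrow> m \<le> u \<bullet> (B x *v u)"
    using compact_pos_def_uniform[OF assms(1,3,4)] by blast
  have "neg_def (A x + t *\<^sub>R B x)" if "t \<le> - (\<bar>M\<bar> + 1) / m" "x \<in> C" for t x
    unfolding neg_def_iff_unit quadratic_form_add_scaleR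
  proof (intro allI impI)
    fix u :: "real^'n" assume u: "norm u = 1"
    have "(\<bar>M\<bar> + 1) / m > 0" using m(1) by simp
    then have "t < 0" using that(1) by linarith
    then have "t * (u \<bullet> (B x *v u)) \<le> t * m" using m(2)[OF that(2) u] by simp
    also have "\<dots> \<le> - (\<bar>M\<bar> + 1)" using that(1) m(1) by (simp add: field_simps)
    finally show "u \<bullet> (A x *v u) + t * (u \<bullet> (B x *v u)) < 0"
      using M[OF that(2) u] by linarith
  qed
  then show ?thesis by (auto simp: eventually_at_bot_linorder)
qed

lemma neg_def_add_scaleR_mono:
  fixes A B :: "real^'n^'n"
  assumes "neg_def (A + t *\<^sub>R B)" "pos_def B" "t' \<le> t"
  shows "neg_def (A + t' *\<^sub>R B)"
  unfolding neg_def_def quadratic_form_add_scaleR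
proof (intro allI impI)
  fix v :: "real^'n" assume "v \<noteq> 0"
  then have "v \<bullet> (A *v v) + t * (v \<bullet> (B *v v)) < 0" "v \<bullet> (B *v v) > 0"
    using assms(1,2) by (auto simp: neg_def_def pos_def_def quadratic_form_add_scaleR)
  moreover have "t' * (v \<bullet> (B *v v)) \<le> t * (v \<bullet> (B *v v))"
    using calculation(2) assms(3) by (simp add: mult_right_mono)
  ultimately show "v \<bullet> (A *v v) + t' * (v \<bullet> (B *v v)) < 0" by linarith
qed

lemma exhausting_components:
  fixes N :: "real \<Rightarrow> 'a::euclidean_space set"
  assumes "convex S" "S \<noteq> {}" "\<And>t. N t \<subseteq> S" "\<And>t t'. t' \<le> t \<Longrightarrow> N t \<subseteq> N t'"
    and exhaust: "\<And>C. compact C \<Longrightarrow> C \<subseteq> S \<Longrightarrow> \<forall>\<^sub>F t in at_bot. C \<subseteq> N t"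
    and "compact K" "K \<subseteq> S"
  shows "\<exists>sK \<ge> 0. \<exists>U. (\<forall>t < -sK. U t \<in> components (N t) \<and> K \<subseteq> U t) \<and>
           (\<forall>t t'. t' < t \<and> t < -sK \<longrightarrow> U t \<subseteq> U t') \<and> (\<Union>t\<in>{..< -sK}. U t) = S"
proof -
  obtain x0 where x0: "x0 \<in> S" using assms(2) by blast
  define C0 where "C0 = convex hull (insert x0 K)"
  have "compact C0" unfolding C0_def using assms(6) by (intro compact_convex_hull compact_insert)
  moreover have "C0 \<subseteq> S" unfolding C0_def using x0 assms(1,7) by (intro hull_minimal) auto
  ultimately obtain T where T: "\<And>t. t \<le> T \<Longrightarrow> C0 \<subseteq> N t"
    using exhaust unfolding eventually_at_bot_linorder by blast
  define sK where "sK = max 0 (- T)"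
  define U where "U t = connected_component_set (N t) x0" for t
  have x0C0: "x0 \<in> C0" unfolding C0_def by (simp add: hull_inc)
  have C0N: "C0 \<subseteq> N t" if "t < -sK" for t
    using T that by (simp add: sK_def)
  have components: "U t \<in> components (N t)" if "t < -sK" for t
    unfolding components_iff U_def using C0N[OF that] x0C0 by blast
  have "K \<subseteq> C0" unfolding C0_def by (meson hull_subset subset_insertI subset_trans)
  moreover have "C0 \<subseteq> U t" if "t < -sK" for t
    unfolding U_def
  proof (rule connected_component_maximal[OF x0C0 _ C0N[OF that]])
    show "connected C0" unfolding C0_def by (simp add: convex_connected)
  qed
  ultimately have K: "K \<subseteq> U t" if "t < -sK" for t using that by blast
  have mono: "U t \<subseteq> U t'" if "t' < t" for t t'
    unfolding U_def using assms(4) that by (simp add: connected_component_mono)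
  have "y \<in> (\<Union>t\<in>{..< -sK}. U t)" if y: "y \<in> S" for y
  proof -
    have "closed_segment x0 y \<subseteq> S" using assms(1) x0 y by (simp add: closed_segment_subset)
    then have "\<forall>\<^sub>F t in at_bot. closed_segment x0 y \<subseteq> N t"
      by (rule exhaust[OF compact_segment])
    then have "\<forall>\<^sub>F t in at_bot. closed_segment x0 y \<subseteq> N t \<and> t < -sK"
      using eventually_gt_at_bot by (rule eventually_conj)
    moreover have "(at_bot :: real filter) \<noteq> bot" by simp
    ultimately obtain t where t: "closed_segment x0 y \<subseteq> N t" "t < -sK"
      using eventually_happens' by blast
    have "closed_segment x0 y \<subseteq> U t"
      unfolding U_def using t(1) by (intro connected_component_maximal) auto
    then show ?thesis using t(2) by auto
  qed
  moreover have "U t \<subseteq> S" for t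
    using assms(3) connected_component_subset unfolding U_def by blast
  ultimately have "(\<Union>t\<in>{..< -sK}. U t) = S" by blast
  moreover have "sK \<ge> 0" by (simp add: sK_def)
  ultimately show ?thesis
    using components K mono by blast
qed

lemma neg_def_pencil_islands:
  fixes A B :: "'a::euclidean_space \<Rightarrow> real^'n^'n"
  assumes "convex S" "S \<noteq> {}" "continuous_on S A" "continuous_on S B" "\<forall>x\<in>S. pos_def (B x)"
    and "compact K" "K \<subseteq> S"
  shows "\<exists>sK \<ge> 0. \<exists>U. (\<forall>t < -sK. U t \<in> components {x \<in> S. neg_def (A x + t *\<^sub>R B x)} \<and> K \<subseteq> U t) \<and>
           (\<forall>t t'. t' < t \<and> t < -sK \<longrightarrow> U t \<subseteq> U t') \<and> (\<Union>t\<in>{..< -sK}. U t) = S"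
proof (rule exhausting_components[OF assms(1,2) _ _ _ assms(6,7)])
  show "{x \<in> S. neg_def (A x + t *\<^sub>R B x)} \<subseteq> {x \<in> S. neg_def (A x + t' *\<^sub>R B x)}" if "t' \<le> t" for t t'
    using assms(5) that by (auto intro: neg_def_add_scaleR_mono)
  show "\<forall>\<^sub>F t in at_bot. C \<subseteq> {x \<in> S. neg_def (A x + t *\<^sub>R B x)}" if "compact C" "C \<subseteq> S" for C
  proof -
    have "\<forall>\<^sub>F t in at_bot. \<forall>x\<in>C. neg_def (A x + t *\<^sub>R B x)"
      using that assms(5) by (intro eventually_neg_def_add_scaleR continuous_on_subset[OF assms(3)]
          continuous_on_subset[OF assms(4)]) auto
    then show ?thesis by (rule eventually_mono) (use that(2) in auto)
  qed
qed auto

theorem mainTheorem8: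
  fixes \<nu> :: "nat \<Rightarrow> real^'n" and lam :: "nat \<Rightarrow> real" and r :: nat
    and \<psi> :: "real^'n \<Rightarrow> real" and U0 :: "(real^'n) set" and K :: "(real^'n) set"
  assumes "delzant \<nu> lam r"
    and "open U0" and "polytope_of \<nu> lam r \<subseteq> U0" and "smooth_on U0 \<psi>"
    and "\<forall>x\<in>polytope_of \<nu> lam r. pos_def (hessian \<psi> x)"
    and "compact K" and "K \<subseteq> interior (polytope_of \<nu> lam r)"
  shows "\<exists>sK \<ge> 0. \<exists>U :: real \<Rightarrow> (real^'n) set.
           (\<forall>t < -sK. U t \<in> neg_islands (polytope_of \<nu> lam r)
                          (\<lambda>x. g_P \<nu> lam r x + t * \<psi> x) \<and> K \<subseteq> U t) \<and>
           (\<forall>t t'. t' < t \<and> t < -sK \<longrightarrow> U t \<subseteq> U t') \<and>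
           (\<Union>t\<in>{..< -sK}. U t) = interior (polytope_of \<nu> lam r)"
proof -
  define S where "S = interior (polytope_of \<nu> lam r)"
  have "S \<noteq> {}" and \<nu>: "\<forall>j<r. \<nu> j \<noteq> 0"
    using assms(1) unfolding delzant_def Let_def primitive_vec_def S_def by auto
  have aff_pos: "\<forall>y\<in>S. \<forall>k<r. aff_fun \<nu> lam k y > 0"
    unfolding S_def using \<nu> aff_fun_pos_interior by blast
  obtain H where cH: "continuous_on S H" and posH: "\<forall>x\<in>S. pos_def (H x)"
    and hess: "\<And>x t. x \<in> S \<Longrightarrow>
           hessian (\<lambda>x. g_P \<nu> lam r x + t * \<psi> x) x = hess_g_P \<nu> lam r x + t *\<^sub>R H x"
    using hessian_g_P_plus_smooth_pencil[OF \<nu> assms(2-5)] unfolding S_def by blast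
  have islands: "neg_islands (polytope_of \<nu> lam r) (\<lambda>x. g_P \<nu> lam r x + t * \<psi> x)
      = components {x \<in> S. neg_def (hess_g_P \<nu> lam r x + t *\<^sub>R H x)}" for t
    unfolding neg_islands_def S_def[symmetric] using hess by (metis (no_types, lifting) mem_Collect_eq)
  have convS: "convex S" and KS: "K \<subseteq> S"
    using assms(7) by (simp_all add: S_def convex_polytope_of convex_interior)
  show ?thesis
    unfolding S_def[symmetric] islands
    by (rule neg_def_pencil_islands[OF convS \<open>S \<noteq> {}\<close> continuous_on_hess_g_P[OF aff_pos] cH posH
          assms(6) KS])
qed

end
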